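(* Let $(H,+,\circ)$ be a commutative multiplicative hyperring with identity $1$, and let $P$ be a nonzero sdf-absorbing $\mathcal{C}$-hyperideal of $H$. Then $\mathrm{rad}(P)=P$.
   Context: A commutative multiplicative hyperring $(H,+,\circ)$ consists of an abelian group $(H,+)$ and a hyperoperation $\circ: H\times H\to P^*(H)$ (nonempty subsets) which is associative ($\bigcup_{a\in y\circ z}x\circ a=\bigcup_{b\in x\circ y}b\circ z$), commutative, satisfies $x\circ(y+z)\subseteq x\circ y+x\circ z$ and $x\circ(-y)=-(x\circ y)=(-x)\circ y$. For subsets $A,B$, $A\circ B=\bigcup_{a\in A,b\in B}a\circ b$ and $A\pm B=\{a\pm b: a\in A,b\in B\}$; $x^n=x\circ\cdots\circ x$ ($n$ factors). An identity $1$ satisfies $x\in x\circ 1$ for all $x$. A hyperideal is a nonempty $P\subseteq H$ with $x-y\in P$ and $r\circ x\subseteq P$ for all $x,y\in P$, $r\in H$. A proper hyperideal $P$ is prime if $x\circ y\subseteq P$ implies $x\in P$ or $y\in P$; $\mathrm{rad}(P)$ is the intersection of all prime hyperideals containing $P$ ($\mathrm{rad}(P)=H$ if there are none). Let $\mathcal{C}=\{c_1\circ\cdots\circ c_n: c_i\in H, n\in\mathbb{N}\}$; a hyperideal $P$ is a $\mathcal{C}$-hyperideal if for every $C\in\mathcal{C}$, $C\cap P\neq\varnothing$ implies $C\subseteq P$. A proper hyperideal $P$ is sdf-absorbing if whenever $0\neq x,y\in H$ and $x^2-y^2\subseteq P$, then $x-y\in P$ or $x+y\in P$. *)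

theory Defs
  imports Main
begin

text \<open>The additive abelian group (H,+) is the ambient type 'a :: ab_group_add
  (so H = UNIV); the hyperoperation is hm :: 'a => 'a => 'a set.\<close>

definition set_mult :: "('a \<Rightarrow> 'a \<Rightarrow> 'a set) \<Rightarrow> 'a set \<Rightarrow> 'a set \<Rightarrow> 'a set" where
  "set_mult hm A B = (\<Union>a\<in>A. \<Union>b\<in>B. hm a b)"

definition set_plus :: "'a::ab_group_add set \<Rightarrow> 'a set \<Rightarrow> 'a set" where
  "set_plus A B = {a + b | a b. a \<in> A \<and> b \<in> B}"

definition set_minus :: "'a::ab_group_add set \<Rightarrow> 'a set \<Rightarrow> 'a set" where
  "set_minus A B = {a - b | a b. a \<in> A \<and> b \<in> B}"

definition comm_mult_hyperring :: "('a::ab_group_add \<Rightarrow> 'a \<Rightarrow> 'a set) \<Rightarrow> bool" where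
  "comm_mult_hyperring hm \<longleftrightarrow>
     (\<forall>x y. hm x y \<noteq> {}) \<and>
     (\<forall>x y z. (\<Union>a\<in>hm y z. hm x a) = (\<Union>b\<in>hm x y. hm b z)) \<and>
     (\<forall>x y. hm x y = hm y x) \<and>
     (\<forall>x y z. hm x (y + z) \<subseteq> set_plus (hm x y) (hm x z)) \<and>
     (\<forall>x y. hm x (- y) = uminus ` (hm x y) \<and> uminus ` (hm x y) = hm (- x) y)"

definition has_identity :: "('a \<Rightarrow> 'a \<Rightarrow> 'a set) \<Rightarrow> bool" where
  "has_identity hm \<longleftrightarrow> (\<exists>one. \<forall>x. x \<in> hm x one)"

fun hprod :: "('a \<Rightarrow> 'a \<Rightarrow> 'a set) \<Rightarrow> 'a list \<Rightarrow> 'a set" where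
  "hprod hm [] = {}"
| "hprod hm [c] = {c}"
| "hprod hm (c # cs) = set_mult hm {c} (hprod hm cs)"

definition hyperideal :: "('a::ab_group_add \<Rightarrow> 'a \<Rightarrow> 'a set) \<Rightarrow> 'a set \<Rightarrow> bool" where
  "hyperideal hm P \<longleftrightarrow> P \<noteq> {} \<and> (\<forall>x\<in>P. \<forall>y\<in>P. x - y \<in> P) \<and> (\<forall>r. \<forall>x\<in>P. hm r x \<subseteq> P)"

definition prime_hyperideal :: "('a::ab_group_add \<Rightarrow> 'a \<Rightarrow> 'a set) \<Rightarrow> 'a set \<Rightarrow> bool" where
  "prime_hyperideal hm P \<longleftrightarrow> hyperideal hm P \<and> P \<noteq> UNIV \<and>
     (\<forall>x y. hm x y \<subseteq> P \<longrightarrow> x \<in> P \<or> y \<in> P)"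

text \<open>Intersection of all primes containing P; the empty intersection is UNIV = H.\<close>
definition hrad :: "('a::ab_group_add \<Rightarrow> 'a \<Rightarrow> 'a set) \<Rightarrow> 'a set \<Rightarrow> 'a set" where
  "hrad hm P = \<Inter> {Q. prime_hyperideal hm Q \<and> P \<subseteq> Q}"

definition C_class :: "('a \<Rightarrow> 'a \<Rightarrow> 'a set) \<Rightarrow> 'a set set" where
  "C_class hm = {hprod hm cs | cs. cs \<noteq> []}"

definition C_hyperideal :: "('a::ab_group_add \<Rightarrow> 'a \<Rightarrow> 'a set) \<Rightarrow> 'a set \<Rightarrow> bool" where
  "C_hyperideal hm P \<longleftrightarrow> hyperideal hm P \<and> (\<forall>C\<in>C_class hm. C \<inter> P \<noteq> {} \<longrightarrow> C \<subseteq> P)"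

definition sdf_absorbing :: "('a::ab_group_add \<Rightarrow> 'a \<Rightarrow> 'a set) \<Rightarrow> 'a set \<Rightarrow> bool" where
  "sdf_absorbing hm P \<longleftrightarrow> hyperideal hm P \<and> P \<noteq> UNIV \<and>
     (\<forall>x y. x \<noteq> 0 \<and> y \<noteq> 0 \<and> set_minus (hprod hm [x, x]) (hprod hm [y, y]) \<subseteq> P
        \<longrightarrow> x - y \<in> P \<or> x + y \<in> P)"

end

theory Submission
  imports Defs
begin

text \<open>A nonzero element i of P makes the sdf condition usable for every x with x o x contained
  in P: the elements x + i and i are nonzero (unless x = -i) and their squares lie in P, and
  either conclusion of the condition puts x into P. With the power law x^m o x^n = x^(m+n) this
  descends from any power of x contained in P down to x itself, and the C-property turns
  "a power of x meets P" into "a power of x is contained in P". That every element of rad(P)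
  has a power meeting P is Krull's argument, which survives in hyperrings: a hyperideal
  containing P that is maximal among those avoiding the powers of x is prime.\<close>

lemma hyperideal_zero: "hyperideal hm Q \<Longrightarrow> 0 \<in> Q"
  unfolding hyperideal_def by (metis all_not_in_conv right_minus_eq)

lemma hyperideal_diff: "hyperideal hm Q \<Longrightarrow> x \<in> Q \<Longrightarrow> y \<in> Q \<Longrightarrow> x - y \<in> Q"
  unfolding hyperideal_def by blast

lemma hyperideal_uminus: "hyperideal hm Q \<Longrightarrow> x \<in> Q \<Longrightarrow> - x \<in> Q"
  using hyperideal_diff hyperideal_zero by (metis diff_0)

lemma hyperideal_add: "hyperideal hm Q \<Longrightarrow> x \<in> Q \<Longrightarrow> y \<in> Q \<Longrightarrow> x + y \<in> Q"
  using hyperideal_diff hyperideal_uminus by (metis diff_minus_eq_add)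

lemma hyperideal_mult_left: "hyperideal hm Q \<Longrightarrow> x \<in> Q \<Longrightarrow> hm r x \<subseteq> Q"
  unfolding hyperideal_def by blast

lemma set_mult_subset_hyperideal: "hyperideal hm Q \<Longrightarrow> B \<subseteq> Q \<Longrightarrow> set_mult hm A B \<subseteq> Q"
  unfolding set_mult_def using hyperideal_mult_left by blast

lemma hyperideal_Union_chain:
  assumes "C \<noteq> {}" and "subset.chain {Q. hyperideal hm Q} C"
  shows "hyperideal hm (\<Union>C)"
proof -
  have ideals: "\<And>Q. Q \<in> C \<Longrightarrow> hyperideal hm Q"
    and total: "\<And>A B. A \<in> C \<Longrightarrow> B \<in> C \<Longrightarrow> A \<subseteq> B \<or> B \<subseteq> A"
    using assms(2) unfolding subset_chain_def by blast+
  show ?thesis unfolding hyperideal_def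
  proof (intro conjI ballI allI subsetI)
    show "\<Union>C \<noteq> {}" using assms(1) ideals hyperideal_zero by blast
  next
    fix x y assume "x \<in> \<Union>C" "y \<in> \<Union>C"
    then obtain A B where "A \<in> C" "B \<in> C" "x \<in> A" "y \<in> B" by blast
    then show "x - y \<in> \<Union>C" using total[of A B] ideals hyperideal_diff by blast
  next
    fix r x t assume "x \<in> \<Union>C" "t \<in> hm r x"
    then show "t \<in> \<Union>C" using ideals hyperideal_mult_left by blast
  qed
qed

text \<open>The empty hyperproduct is the empty set, so powers are meaningful only from exponent 1 on
  and are always written with exponent Suc n.\<close>
definition hpower :: "('a \<Rightarrow> 'a \<Rightarrow> 'a set) \<Rightarrow> 'a \<Rightarrow> nat \<Rightarrow> 'a set" where
  "hpower hm x n = hprod hm (replicate n x)"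

definition hpowers :: "('a \<Rightarrow> 'a \<Rightarrow> 'a set) \<Rightarrow> 'a \<Rightarrow> 'a set" where
  "hpowers hm x = (\<Union>n. hpower hm x (Suc n))"

lemma hpower_one [simp]: "hpower hm x (Suc 0) = {x}"
  by (simp add: hpower_def)

lemma hpower_Suc_Suc: "hpower hm x (Suc (Suc n)) = set_mult hm {x} (hpower hm x (Suc n))"
  by (simp add: hpower_def)

lemma mem_hpowers_self: "x \<in> hpowers hm x"
  unfolding hpowers_def by (rule UN_I[of 0]) simp_all

lemma hpower_in_C_class: "hpower hm x (Suc n) \<in> C_class hm"
  unfolding C_class_def hpower_def by (intro CollectI exI[of _ "replicate (Suc n) x"]) simp

lemma C_hyperideal_hpower:
  "C_hyperideal hm P \<Longrightarrow> hpower hm x (Suc n) \<inter> P \<noteq> {} \<Longrightarrow> hpower hm x (Suc n) \<subseteq> P"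
  unfolding C_hyperideal_def by (meson hpower_in_C_class)

locale comm_hyperring =
  fixes hm :: "'a::ab_group_add \<Rightarrow> 'a \<Rightarrow> 'a set"
  assumes comm_mult_hyperring: "comm_mult_hyperring hm"
begin

lemma nonempty: "hm x y \<noteq> {}"
  using comm_mult_hyperring unfolding comm_mult_hyperring_def by meson

lemma assoc: "(\<Union>a\<in>hm y z. hm x a) = (\<Union>b\<in>hm x y. hm b z)"
  using comm_mult_hyperring unfolding comm_mult_hyperring_def by meson

lemma commute: "hm x y = hm y x"
  using comm_mult_hyperring unfolding comm_mult_hyperring_def by meson

lemma distrib: "hm x (y + z) \<subseteq> set_plus (hm x y) (hm x z)"
  using comm_mult_hyperring unfolding comm_mult_hyperring_def by meson

lemma minus_right: "hm x (- y) = uminus ` hm x y"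
  using comm_mult_hyperring unfolding comm_mult_hyperring_def by meson

lemma set_mult_assoc: "set_mult hm A (set_mult hm B C) = set_mult hm (set_mult hm A B) C"
  unfolding set_mult_def using assoc by auto

lemma hyperideal_mult_right: "hyperideal hm Q \<Longrightarrow> x \<in> Q \<Longrightarrow> hm x r \<subseteq> Q"
  using hyperideal_mult_left commute by metis

lemma mult_add_subset_hyperideal:
  assumes "hyperideal hm Q" "hm a b \<subseteq> Q" "hm a c \<subseteq> Q"
  shows "hm a (b + c) \<subseteq> Q"
proof
  fix t assume "t \<in> hm a (b + c)"
  then obtain u v where "u \<in> hm a b" "v \<in> hm a c" "t = u + v"
    using distrib unfolding set_plus_def by blast
  then show "t \<in> Q" using assms hyperideal_add by blast
qed

lemma mult_diff_subset_hyperideal: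
  assumes "hyperideal hm Q" "hm a b \<subseteq> Q" "hm a c \<subseteq> Q"
  shows "hm a (b - c) \<subseteq> Q"
proof -
  have "hm a (- c) \<subseteq> Q" using assms(1,3) hyperideal_uminus by (auto simp: minus_right)
  then have "hm a (b + - c) \<subseteq> Q" by (rule mult_add_subset_hyperideal[OF assms(1,2)])
  then show ?thesis by simp
qed

lemma hyperideal_colon:
  assumes Q: "hyperideal hm Q"
  shows "hyperideal hm {r. hm r b \<subseteq> Q}"
  unfolding hyperideal_def
proof (intro conjI ballI allI subsetI)
  show "{r. hm r b \<subseteq> Q} \<noteq> {}" using Q hyperideal_zero hyperideal_mult_right by blast
next
  fix r s assume "r \<in> {r. hm r b \<subseteq> Q}" "s \<in> {r. hm r b \<subseteq> Q}"
  then have "hm b (r - s) \<subseteq> Q" using mult_diff_subset_hyperideal[OF Q] by (simp add: commute)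
  then show "r - s \<in> {r. hm r b \<subseteq> Q}" by (simp add: commute)
next
  fix s r t assume r: "r \<in> {r. hm r b \<subseteq> Q}" and t: "t \<in> hm s r"
  have "hm t b \<subseteq> (\<Union>e\<in>hm s r. hm e b)" using t by blast
  also have "\<dots> = (\<Union>c\<in>hm r b. hm s c)" by (rule assoc[symmetric])
  also have "\<dots> \<subseteq> Q" using r Q hyperideal_mult_left by blast
  finally show "t \<in> {r. hm r b \<subseteq> Q}" by simp
qed

lemma hpower_add:
  "set_mult hm (hpower hm x (Suc m)) (hpower hm x (Suc n)) = hpower hm x (Suc m + Suc n)"
proof (induction m)
  case 0
  then show ?case by (simp add: hpower_Suc_Suc)
next
  case (Suc m)
  have "set_mult hm (hpower hm x (Suc (Suc m))) (hpower hm x (Suc n))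
      = set_mult hm {x} (set_mult hm (hpower hm x (Suc m)) (hpower hm x (Suc n)))"
    by (simp add: hpower_Suc_Suc set_mult_assoc)
  also have "\<dots> = hpower hm x (Suc (Suc m) + Suc n)"
    using Suc.IH by (simp add: hpower_Suc_Suc)
  finally show ?case .
qed

lemma hpower_mult_subset:
  "u \<in> hpower hm x (Suc m) \<Longrightarrow> v \<in> hpower hm x (Suc n) \<Longrightarrow> hm u v \<subseteq> hpower hm x (Suc m + Suc n)"
  using hpower_add[of x m n] unfolding set_mult_def by blast

lemma hpowers_mult_subset:
  assumes "u \<in> hpowers hm x" and "v \<in> hpowers hm x"
  shows "hm u v \<subseteq> hpowers hm x"
proof -
  obtain m n where "u \<in> hpower hm x (Suc m)" "v \<in> hpower hm x (Suc n)"
    using assms unfolding hpowers_def by blast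
  then have "hm u v \<subseteq> hpower hm x (Suc (Suc m + n))" using hpower_mult_subset by simp
  then show ?thesis unfolding hpowers_def by blast
qed

lemma hpower_subset_hyperideal_mono:
  assumes Q: "hyperideal hm Q" and "hpower hm x (Suc m) \<subseteq> Q" and "m \<le> n"
  shows "hpower hm x (Suc n) \<subseteq> Q"
proof (cases "m = n")
  case False
  then have "hpower hm x (Suc n) = set_mult hm (hpower hm x (Suc (n - Suc m))) (hpower hm x (Suc m))"
    using \<open>m \<le> n\<close> by (subst hpower_add) simp
  then show ?thesis using set_mult_subset_hyperideal[OF Q \<open>hpower hm x (Suc m) \<subseteq> Q\<close>] by simp
qed (use assms in simp)

lemma sdf_absorbing_square_imp_mem:
  assumes sdf: "sdf_absorbing hm P" and i: "i \<in> P" "i \<noteq> 0" and "hm x x \<subseteq> P"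
  shows "x \<in> P"
proof -
  have P: "hyperideal hm P" using sdf unfolding sdf_absorbing_def by blast
  show ?thesis
  proof (cases "x + i = 0")
    case True
    then have "x = - i" by (simp add: add_eq_0_iff)
    then show ?thesis using hyperideal_uminus[OF P i(1)] by simp
  next
    case False
    have "hm i i \<subseteq> P" "hm x i \<subseteq> P" "hm (x + i) i \<subseteq> P"
      using P i(1) hyperideal_mult_left by blast+
    have "hm x (x + i) \<subseteq> P"
      using mult_add_subset_hyperideal[OF P \<open>hm x x \<subseteq> P\<close> \<open>hm x i \<subseteq> P\<close>] .
    then have "hm (x + i) (x + i) \<subseteq> P"
      using mult_add_subset_hyperideal[OF P _ \<open>hm (x + i) i \<subseteq> P\<close>] by (simp add: commute)
    then have "set_minus (hprod hm [x + i, x + i]) (hprod hm [i, i]) \<subseteq> P"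
      using \<open>hm i i \<subseteq> P\<close> P hyperideal_diff by (fastforce simp: set_minus_def set_mult_def)
    then have "x + i - i \<in> P \<or> x + i + i \<in> P"
      using sdf False i(2) unfolding sdf_absorbing_def by blast
    then show ?thesis
    proof
      assume "x + i + i \<in> P"
      then have "x + i + i - i - i \<in> P" using P i(1) hyperideal_diff by blast
      then show ?thesis by simp
    qed simp
  qed
qed

lemma sdf_absorbing_hpower_imp_mem:
  assumes sdf: "sdf_absorbing hm P" and i: "i \<in> P" "i \<noteq> 0"
  shows "hpower hm x (Suc n) \<subseteq> P \<Longrightarrow> x \<in> P"
proof (induction n)
  case (Suc n)
  have P: "hyperideal hm P" using sdf unfolding sdf_absorbing_def by blast
  have "hpower hm x (Suc (Suc n + n)) \<subseteq> P"
    using hpower_subset_hyperideal_mono[OF P Suc.prems, of "Suc n + n"] by simp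
  then have "hm y y \<subseteq> P" if "y \<in> hpower hm x (Suc n)" for y
    using hpower_mult_subset[OF that that] by simp
  then have "hpower hm x (Suc n) \<subseteq> P" using sdf_absorbing_square_imp_mem[OF sdf i] by blast
  then show ?case by (rule Suc.IH)
qed simp

lemma maximal_hyperideal_avoiding_hpowers_prime:
  assumes M: "hyperideal hm M" and avoid: "M \<inter> hpowers hm x = {}"
    and maximal: "\<And>Q. hyperideal hm Q \<Longrightarrow> M \<subseteq> Q \<Longrightarrow> Q \<inter> hpowers hm x = {} \<Longrightarrow> Q = M"
  shows "prime_hyperideal hm M"
proof -
  have meet: "\<exists>u \<in> hpowers hm x. hm u c \<subseteq> M" if "a \<notin> M" "hm a c \<subseteq> M" for a c
  proof -
    let ?K = "{r. hm r c \<subseteq> M}"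
    have "hyperideal hm ?K" using hyperideal_colon[OF M] .
    moreover have "M \<subseteq> ?K" using M hyperideal_mult_right by blast
    moreover have "?K \<noteq> M" using that by blast
    ultimately have "?K \<inter> hpowers hm x \<noteq> {}" using maximal by blast
    then show ?thesis by blast
  qed
  have "a \<in> M \<or> b \<in> M" if ab: "hm a b \<subseteq> M" for a b
  proof (rule ccontr)
    assume "\<not> (a \<in> M \<or> b \<in> M)"
    then have "a \<notin> M" "b \<notin> M" by blast+
    obtain u where u: "u \<in> hpowers hm x" "hm u b \<subseteq> M" using meet[OF \<open>a \<notin> M\<close> ab] by blast
    have "hm b u \<subseteq> M" using u(2) by (subst commute)
    then obtain v where v: "v \<in> hpowers hm x" "hm v u \<subseteq> M" using meet[OF \<open>b \<notin> M\<close>] by blast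
    have "hm v u \<subseteq> M \<inter> hpowers hm x" using hpowers_mult_subset[OF v(1) u(1)] v(2) by blast
    then show False using avoid nonempty[of v u] by blast
  qed
  moreover have "x \<notin> M" using avoid mem_hpowers_self by fast
  then have "M \<noteq> UNIV" by blast
  ultimately show ?thesis using M unfolding prime_hyperideal_def by blast
qed

lemma prime_hyperideal_avoiding_hpowers:
  assumes "hyperideal hm P" "P \<inter> hpowers hm x = {}"
  obtains M where "prime_hyperideal hm M" "P \<subseteq> M" "M \<inter> hpowers hm x = {}"
proof -
  let ?F = "{Q. hyperideal hm Q \<and> P \<subseteq> Q \<and> Q \<inter> hpowers hm x = {}}"
  have "\<exists>M\<in>?F. \<forall>Q\<in>?F. M \<subseteq> Q \<longrightarrow> Q = M"
  proof (rule subset_Zorn_nonempty)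
    show "?F \<noteq> {}" using assms by blast
  next
    fix C assume "C \<noteq> {}" and chain: "subset.chain ?F C"
    then have "hyperideal hm (\<Union>C)"
      by (intro hyperideal_Union_chain) (auto simp: subset_chain_def)
    then show "\<Union>C \<in> ?F" using \<open>C \<noteq> {}\<close> chain by (auto simp: subset_chain_def)
  qed
  then obtain M where "M \<in> ?F" and "\<forall>Q\<in>?F. M \<subseteq> Q \<longrightarrow> Q = M" by blast
  then have "prime_hyperideal hm M"
    by (intro maximal_hyperideal_avoiding_hpowers_prime) auto
  then show thesis using that \<open>M \<in> ?F\<close> by blast
qed

lemma hpowers_meet_if_mem_hrad:
  assumes "hyperideal hm P" and "x \<in> hrad hm P"
  shows "P \<inter> hpowers hm x \<noteq> {}"
proof
  assume "P \<inter> hpowers hm x = {}"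
  then obtain M where "prime_hyperideal hm M" "P \<subseteq> M" and avoid: "M \<inter> hpowers hm x = {}"
    by (rule prime_hyperideal_avoiding_hpowers[OF assms(1)])
  then have "x \<in> M" using assms(2) unfolding hrad_def by blast
  with avoid show False using mem_hpowers_self by fast
qed

end

theorem mainTheorem1:
  fixes hm :: "'a::ab_group_add \<Rightarrow> 'a \<Rightarrow> 'a set" and P :: "'a set"
  assumes "comm_mult_hyperring hm"
    and "has_identity hm"
    and "P \<noteq> {0}"
    and "sdf_absorbing hm P"
    and "C_hyperideal hm P"
  shows "hrad hm P = P"
proof
  show "P \<subseteq> hrad hm P" unfolding hrad_def by blast
next
  interpret comm_hyperring hm by (rule comm_hyperring.intro) (rule assms(1))
  have P: "hyperideal hm P" using assms(4) unfolding sdf_absorbing_def by blast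
  obtain i where i: "i \<in> P" "i \<noteq> 0" using hyperideal_zero[OF P] assms(3) by blast
  show "hrad hm P \<subseteq> P"
  proof
    fix x assume "x \<in> hrad hm P"
    then obtain n where "hpower hm x (Suc n) \<inter> P \<noteq> {}"
      using hpowers_meet_if_mem_hrad[OF P] unfolding hpowers_def by blast
    then have "hpower hm x (Suc n) \<subseteq> P" using C_hyperideal_hpower[OF assms(5)] by blast
    then show "x \<in> P" by (rule sdf_absorbing_hpower_imp_mem[OF assms(4) i])
  qed
qed

end
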